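(* Suppose $\mathcal W$ is a locally minimal Banach space with a Schauder basis $(e_n)$. Then $\mathcal W$, with respect to the basis $(e_n)$, is $\omega^2$-minimal.
   Context: $\mathcal W$ is locally minimal if there is a constant $K\ge1$ such that for every finite-dimensional subspace $\mathcal F\subseteq\mathcal W$ and every infinite-dimensional subspace $\mathcal Y\subseteq\mathcal W$, $\mathcal F$ embeds into $\mathcal Y$ by an isomorphism $T$ with $\|T\|\|T^{-1}\|\le K$. For sequences $(x_i)_{i\le k},(y_i)_{i\le k}$ and $K\ge1$, $(x_i)\sim_K(y_i)$ means $\frac1K\|\sum_i a_ix_i\|\le\|\sum_i a_iy_i\|\le K\|\sum_i a_ix_i\|$ for all real $a_i$. For a basic sequence $(y_n)$ and a Banach space $\mathcal Y$, $T((y_n),\mathcal Y,K)$ is the tree of all finite sequences $(v_0,\dots,v_k)$ in $\mathcal Y$, including the empty one, with $(v_0,\dots,v_k)\sim_K(y_0,\dots,y_k)$. For a well-founded tree $T$, $\rho_T(s)=\sup\{\rho_T(t)+1:s\prec t\in T\}$ ($0$ at terminal nodes) and ${\rm rank}(T)=\sup\{\rho_T(s)+1:s\in T\}$; for ill-founded $T$, ${\rm rank}(T)=\infty>\alpha$ for all ordinals $\alpha$. ${\rm Emb}((y_n),\mathcal Y)=\sup_{K\ge1}{\rm rank}(T((y_n),\mathcal Y,K))$. A space $\mathcal W$ with Schauder basis $(e_n)$ is $\beta$-minimal if for every block basis $(z_n)$ of $(e_n)$ and every infinite-dimensional closed subspace $\mathcal Y\subseteq\mathcal W$, ${\rm Emb}((z_n),\mathcal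 Y)\ge\beta$. *)

theory Defs
  imports "HOL-Analysis.Analysis" "HOL-Library.Sublist"
begin

definition schauder_basis :: "(nat \<Rightarrow> 'a::banach) \<Rightarrow> bool" where
  "schauder_basis e \<longleftrightarrow>
     (\<forall>x. \<exists>!a :: nat \<Rightarrow> real. (\<lambda>N. \<Sum>i<N. a i *\<^sub>R e i) \<longlonglongrightarrow> x)"

definition block_basis :: "(nat \<Rightarrow> 'a::real_normed_vector) \<Rightarrow> (nat \<Rightarrow> 'a) \<Rightarrow> bool" where
  "block_basis e z \<longleftrightarrow>
     (\<exists>(p :: nat \<Rightarrow> nat) (a :: nat \<Rightarrow> real). strict_mono p \<and>
        (\<forall>n. z n = (\<Sum>i\<in>{p n..<p (Suc n)}. a i *\<^sub>R e i) \<and> z n \<noteq> 0))"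

definition fin_dim_subspace :: "'a::real_vector set \<Rightarrow> bool" where
  "fin_dim_subspace F \<longleftrightarrow> subspace F \<and> (\<exists>B. finite B \<and> F = span B)"

definition inf_dim_subspace :: "'a::real_vector set \<Rightarrow> bool" where
  "inf_dim_subspace Y \<longleftrightarrow> subspace Y \<and> \<not> (\<exists>B. finite B \<and> Y = span B)"

text \<open>F embeds into Y by an isomorphism T (onto its image) with
  \<open>\<parallel>T\<parallel>\<parallel>T\<^sup>-\<^sup>1\<parallel> \<le> K\<close>; A and B play the roles of \<open>\<parallel>T\<parallel>\<close> and \<open>\<parallel>T\<^sup>-\<^sup>1\<parallel>\<close>.\<close>
definition embeds_with_const :: "'a::real_normed_vector set \<Rightarrow> 'a set \<Rightarrow> real \<Rightarrow> bool" where
  "embeds_with_const F Y K \<longleftrightarrow>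
     (\<exists>(T :: 'a \<Rightarrow> 'a) (A :: real) (B :: real).
        (\<forall>x\<in>F. \<forall>y\<in>F. T (x + y) = T x + T y) \<and>
        (\<forall>c. \<forall>x\<in>F. T (c *\<^sub>R x) = c *\<^sub>R T x) \<and>
        T ` F \<subseteq> Y \<and> A * B \<le> K \<and>
        (\<forall>x\<in>F. norm (T x) \<le> A * norm x \<and> norm x \<le> B * norm (T x)))"

definition locally_minimal :: "'a::real_normed_vector set \<Rightarrow> bool" where
  "locally_minimal W \<longleftrightarrow>
     (\<exists>K\<ge>1. \<forall>F Y. fin_dim_subspace F \<longrightarrow> F \<subseteq> W \<longrightarrow>
                   inf_dim_subspace Y \<longrightarrow> Y \<subseteq> W \<longrightarrow> embeds_with_const F Y K)"

definition seq_equiv :: "real \<Rightarrow> 'a::real_normed_vector list \<Rightarrow> 'a list \<Rightarrow> bool" where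
  "seq_equiv K xs ys \<longleftrightarrow> length xs = length ys \<and>
     (\<forall>a :: nat \<Rightarrow> real.
        (1 / K) * norm (\<Sum>i<length xs. a i *\<^sub>R xs ! i) \<le> norm (\<Sum>i<length ys. a i *\<^sub>R ys ! i) \<and>
        norm (\<Sum>i<length ys. a i *\<^sub>R ys ! i) \<le> K * norm (\<Sum>i<length xs. a i *\<^sub>R xs ! i))"

definition emb_tree :: "(nat \<Rightarrow> 'a::real_normed_vector) \<Rightarrow> 'a set \<Rightarrow> real \<Rightarrow> 'a list set" where
  "emb_tree y Y K = {vs. set vs \<subseteq> Y \<and> seq_equiv K vs (map y [0..<length vs])}"

definition ill_founded :: "'b list set \<Rightarrow> bool" where
  "ill_founded T \<longleftrightarrow> (\<exists>v :: nat \<Rightarrow> 'b. \<forall>k. map v [0..<k] \<in> T)"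

text \<open>\<open>rho_ge T m n s\<close> expresses \<open>\<rho>\<^sub>T(s) \<ge> \<omega>\<cdot>m + n\<close> (for s \<in> T), via the
  standard recursion: \<open>\<rho>(s) \<ge> \<alpha>+1\<close> iff some proper extension t \<in> T of s has
  \<open>\<rho>(t) \<ge> \<alpha>\<close>; \<open>\<rho>(s) \<ge> \<omega>\<cdot>(m+1)\<close> iff \<open>\<rho>(s) \<ge> \<omega>\<cdot>m+n\<close> for all n.\<close>
fun rho_ge :: "'b list set \<Rightarrow> nat \<Rightarrow> nat \<Rightarrow> 'b list \<Rightarrow> bool" where
  "rho_ge T 0 0 s = (s \<in> T)"
| "rho_ge T (Suc m) 0 s = (s \<in> T \<and> (\<forall>n. rho_ge T m n s))"
| "rho_ge T m (Suc n) s = (s \<in> T \<and> (\<exists>t\<in>T. strict_prefix s t \<and> rho_ge T m n t))"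

text \<open>\<open>rank(T) > \<omega>\<cdot>m + n\<close>, i.e. some node s has \<open>\<rho>\<^sub>T(s) + 1 > \<omega>\<cdot>m+n\<close>.\<close>
definition rank_gt :: "'b list set \<Rightarrow> nat \<Rightarrow> nat \<Rightarrow> bool" where
  "rank_gt T m n \<longleftrightarrow> (\<exists>s\<in>T. rho_ge T m n s)"

text \<open>\<open>Emb((y_n),Y) = sup\<^sub>K rank(T((y_n),Y,K)) \<ge> \<omega>\<^sup>2\<close>: either some tree is
  ill-founded (rank \<infinity>), or for every \<open>\<alpha> = \<omega>\<cdot>m+n < \<omega>\<^sup>2\<close> some tree has rank \<open>> \<alpha>\<close>.\<close>
definition Emb_ge_omega2 :: "(nat \<Rightarrow> 'a::real_normed_vector) \<Rightarrow> 'a set \<Rightarrow> bool" where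
  "Emb_ge_omega2 y Y \<longleftrightarrow>
     (\<exists>K\<ge>1. ill_founded (emb_tree y Y K)) \<or>
     (\<forall>m n. \<exists>K\<ge>1. rank_gt (emb_tree y Y K) m n)"

definition omega2_minimal :: "(nat \<Rightarrow> 'a::real_normed_vector) \<Rightarrow> bool" where
  "omega2_minimal e \<longleftrightarrow>
     (\<forall>z Y. block_basis e z \<longrightarrow> closed Y \<longrightarrow> inf_dim_subspace Y \<longrightarrow> Emb_ge_omega2 z Y)"

end

theory Submission
  imports Defs
begin

text \<open>The partial sum projections of a Schauder basis are uniformly bounded (by a Baire category
  argument), so a block basis \<open>(z\<^sub>n)\<close> controls coordinates, and a late enough projection almost
  fixes the span of any finite sequence \<open>K\<close>-equivalent to an initial segment of \<open>(z\<^sub>n)\<close>. Local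
  minimality embeds the next \<open>N\<close> block vectors, with constant \<open>K\<^sub>0\<close>, into the finite-codimensional
  part of \<open>Y\<close> killed by that projection, and the concatenated sequence is
  \<open>5 C (K + K\<^sub>0)\<close>-equivalent to an initial segment of \<open>(z\<^sub>n)\<close>. Thus every node of the embedding
  tree with constant \<open>K\<close> extends arbitrarily far in the tree with constant \<open>5 C (K + K\<^sub>0)\<close>, and
  iterating this \<open>m + 1\<close> times from \<open>K = 1\<close> gives a tree of rank beyond \<open>\<omega> \<cdot> m + n\<close>.\<close>

lemma complete_space_cover_ball_in_closure:
  fixes A :: "nat \<Rightarrow> 'a::complete_space set"
  assumes "(\<Union>n. A n) = UNIV"
  shows "\<exists>n x r. r > 0 \<and> ball x r \<subseteq> closure (A n)"
proof (rule ccontr)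
  assume no_ball: "\<not> ?thesis"
  have "euclidean interior_of (\<Union>n. closure (A n)) = {}"
  proof (rule Baire_category_alt)
    show "completely_metrizable_space (euclidean :: 'a topology) \<or>
        locally_compact_space (euclidean :: 'a topology) \<and> regular_space (euclidean :: 'a topology)"
      using completely_metrizable_space_euclidean by blast
    fix T assume "T \<in> range (\<lambda>n. closure (A n))"
    then obtain n where T: "T = closure (A n)" by blast
    have "interior T = {}"
    proof (rule ccontr)
      assume "interior T \<noteq> {}"
      then obtain x where "x \<in> interior T" by blast
      then obtain r where "r > 0" "ball x r \<subseteq> interior T"
        using open_interior[of T] unfolding open_contains_ball by blast
      with no_ball T interior_subset[of T] show False by blast
    qed
    then show "closedin euclidean T \<and> euclidean interior_of T = {}"
      using T closed_closedin by auto
  qed simp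
  moreover have "(\<Union>n. closure (A n)) = UNIV" using assms closure_subset by blast
  ultimately show False by simp
qed

locale schauder =
  fixes e :: "nat \<Rightarrow> 'a::banach"
  assumes schauder_basis: "schauder_basis e"
begin

definition coord :: "'a \<Rightarrow> nat \<Rightarrow> real" where
  "coord x = (THE a. (\<lambda>N. \<Sum>i<N. a i *\<^sub>R e i) \<longlonglongrightarrow> x)"

definition psum :: "nat \<Rightarrow> 'a \<Rightarrow> 'a" where
  "psum N x = (\<Sum>i<N. coord x i *\<^sub>R e i)"

lemma coord_unique:
  assumes "(\<lambda>N. \<Sum>i<N. a i *\<^sub>R e i) \<longlonglongrightarrow> x"
  shows "coord x = a"
proof -
  have "\<exists>!a. (\<lambda>N. \<Sum>i<N. a i *\<^sub>R e i) \<longlonglongrightarrow> x"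
    using schauder_basis unfolding schauder_basis_def by blast
  then show ?thesis unfolding coord_def by (rule the1_equality) (rule assms)
qed

lemma psum_tendsto: "(\<lambda>N. psum N x) \<longlonglongrightarrow> x"
proof -
  have "\<exists>!a. (\<lambda>N. \<Sum>i<N. a i *\<^sub>R e i) \<longlonglongrightarrow> x"
    using schauder_basis unfolding schauder_basis_def by blast
  then show ?thesis unfolding psum_def coord_def by (rule theI')
qed

lemma coord_add: "coord (x + y) = (\<lambda>i. coord x i + coord y i)"
proof (rule coord_unique)
  have "(\<lambda>N. psum N x + psum N y) \<longlonglongrightarrow> x + y" by (intro tendsto_add psum_tendsto)
  then show "(\<lambda>N. \<Sum>i<N. (coord x i + coord y i) *\<^sub>R e i) \<longlonglongrightarrow> x + y"
    by (simp add: psum_def scaleR_add_left sum.distrib)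
qed

lemma coord_scaleR: "coord (c *\<^sub>R x) = (\<lambda>i. c * coord x i)"
proof (rule coord_unique)
  have "(\<lambda>N. c *\<^sub>R psum N x) \<longlonglongrightarrow> c *\<^sub>R x" by (intro tendsto_scaleR tendsto_const psum_tendsto)
  then show "(\<lambda>N. \<Sum>i<N. (c * coord x i) *\<^sub>R e i) \<longlonglongrightarrow> c *\<^sub>R x"
    by (simp add: psum_def scaleR_sum_right)
qed

lemma linear_coord: "linear (\<lambda>x. coord x i)"
  by (rule linearI) (simp_all add: coord_add coord_scaleR)

lemma linear_psum: "linear (psum N)"
proof (rule linearI)
  show "psum N (x + y) = psum N x + psum N y" for x y
    by (simp add: psum_def coord_add scaleR_add_left sum.distrib)
  show "psum N (c *\<^sub>R x) = c *\<^sub>R psum N x" for c x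
    by (simp add: psum_def coord_scaleR scaleR_sum_right)
qed

lemmas psum_add = linear_add[OF linear_psum]
   and psum_diff = linear_diff[OF linear_psum]
   and psum_scaleR = linear_scale[OF linear_psum]
   and psum_zero = linear_0[OF linear_psum]
   and psum_sum = linear_sum[OF linear_psum]

lemma basis_nonzero: "e i \<noteq> 0"
proof
  assume "e i = 0"
  then have "(\<Sum>j<N. (if j = i then 1 else 0::real) *\<^sub>R e j) = 0" for N
    by (intro sum.neutral) auto
  then have "coord 0 = (\<lambda>j. if j = i then 1 else 0)"
    using coord_unique[of "\<lambda>j. if j = i then 1 else 0" 0] by simp
  moreover have "coord 0 = (\<lambda>j. 0)" using coord_unique[of "\<lambda>j. 0" 0] by simp
  ultimately show False by (metis zero_neq_one)
qed

lemma psum_finite_sum: "psum N (\<Sum>i<M. c i *\<^sub>R e i) = (\<Sum>i<min N M. c i *\<^sub>R e i)"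
proof -
  let ?c = "\<lambda>i. if i < M then c i else 0"
  have "(\<Sum>i<N. ?c i *\<^sub>R e i) = (\<Sum>i<M. ?c i *\<^sub>R e i)" if "N \<ge> M" for N
    using that by (intro sum.mono_neutral_right) auto
  then have "\<forall>\<^sub>F N in sequentially. (\<Sum>i<N. ?c i *\<^sub>R e i) = (\<Sum>i<M. c i *\<^sub>R e i)"
    by (intro eventually_sequentiallyI[of M]) simp
  then have "coord (\<Sum>i<M. c i *\<^sub>R e i) = ?c"
    by (intro coord_unique tendsto_eventually)
  then have "psum N (\<Sum>i<M. c i *\<^sub>R e i) = (\<Sum>i<N. ?c i *\<^sub>R e i)" by (simp add: psum_def)
  also have "\<dots> = (\<Sum>i<min N M. ?c i *\<^sub>R e i)" by (intro sum.mono_neutral_right) auto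
  finally show ?thesis by simp
qed

lemma abs_coord_le:
  assumes "\<And>N. norm (psum N y) \<le> M"
  shows "\<bar>coord y i\<bar> * norm (e i) \<le> 2 * M"
proof -
  have "\<bar>coord y i\<bar> * norm (e i) = norm (psum (Suc i) y - psum i y)" by (simp add: psum_def)
  also have "\<dots> \<le> norm (psum (Suc i) y) + norm (psum i y)" by (rule norm_triangle_ineq4)
  also have "\<dots> \<le> 2 * M" using assms[of "Suc i"] assms[of i] by simp
  finally show ?thesis .
qed

definition psum_bounded :: "real \<Rightarrow> 'a set" where
  "psum_bounded M = {x. \<forall>N. norm (psum N x) \<le> M}"

lemma ball_in_closure_psum_bounded: "\<exists>M x0 r. r > 0 \<and> ball x0 r \<subseteq> closure (psum_bounded M)"
proof -
  have "\<exists>n. x \<in> psum_bounded (real n)" for x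
  proof -
    have "Bseq (\<lambda>N. psum N x)" by (rule convergent_imp_Bseq[OF convergentI[OF psum_tendsto]])
    then obtain M where "\<And>N. norm (psum N x) \<le> M" by (auto simp: Bseq_def)
    moreover obtain n where "M \<le> real n" using real_arch_simple by blast
    ultimately have "norm (psum N x) \<le> real n" for N by (meson order_trans)
    then show ?thesis unfolding psum_bounded_def by blast
  qed
  then have "(\<Union>n. psum_bounded (real n)) = UNIV" by blast
  from complete_space_cover_ball_in_closure[OF this] show ?thesis by blast
qed

text \<open>The set \<open>psum_bounded M\<close> is convex and symmetric, so approximants of \<open>x0 + x\<close> and
  \<open>x0 - x\<close> average to an approximant of \<open>x\<close>.\<close>
lemma approx_in_psum_bounded:
  assumes ball: "ball x0 r \<subseteq> closure (psum_bounded M)" and "norm x < r" "\<epsilon> > 0"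
  shows "\<exists>y\<in>psum_bounded M. norm (x - y) < \<epsilon>"
proof -
  have "x0 + x \<in> closure (psum_bounded M)" "x0 - x \<in> closure (psum_bounded M)"
    using ball assms(2) by (auto simp: dist_norm subset_iff)
  then obtain y1 y2 where y1: "y1 \<in> psum_bounded M" "dist y1 (x0 + x) < \<epsilon>"
    and y2: "y2 \<in> psum_bounded M" "dist y2 (x0 - x) < \<epsilon>"
    using \<open>\<epsilon> > 0\<close> unfolding closure_approachable by blast
  define y where "y = (1/2) *\<^sub>R (y1 - y2)"
  have "norm (psum N y) \<le> M" for N
  proof -
    have "norm (psum N y) \<le> (norm (psum N y1) + norm (psum N y2)) / 2"
      using norm_triangle_ineq4[of "psum N y1" "psum N y2"] by (simp add: y_def psum_scaleR psum_diff)
    also have "\<dots> \<le> (M + M) / 2"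
      using y1(1) y2(1) unfolding psum_bounded_def by (intro divide_right_mono add_mono) auto
    finally show ?thesis by simp
  qed
  moreover have "norm (x - y) < \<epsilon>"
  proof -
    have "x - y = (1/2) *\<^sub>R ((x0 + x - y1) - (x0 - x - y2))"
      by (simp add: y_def algebra_simps flip: scaleR_add_left)
    then have "norm (x - y) \<le> (1/2) * (norm (x0 + x - y1) + norm (x0 - x - y2))"
      using norm_triangle_ineq4[of "x0 + x - y1" "x0 - x - y2"] by simp
    also have "\<dots> < \<epsilon>" using y1(2) y2(2) by (simp add: dist_norm norm_minus_commute)
    finally show ?thesis .
  qed
  ultimately show ?thesis unfolding psum_bounded_def by blast
qed

lemma half_approx_by_psum_bounded:
  "\<exists>c\<ge>0. \<forall>x. \<exists>y. (\<forall>N. norm (psum N y) \<le> c * norm x) \<and> norm (x - y) \<le> norm x / 2"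
proof -
  obtain M x0 r where r: "r > 0" and ball: "ball x0 r \<subseteq> closure (psum_bounded M)"
    using ball_in_closure_psum_bounded by blast
  have M: "M \<ge> 0"
  proof -
    obtain y where "y \<in> psum_bounded M" using approx_in_psum_bounded[OF ball, of 0 1] r by auto
    then show ?thesis unfolding psum_bounded_def using norm_ge_zero order_trans by blast
  qed
  define c where "c = 2 * M / r"
  have "\<exists>y. (\<forall>N. norm (psum N y) \<le> c * norm x) \<and> norm (x - y) \<le> norm x / 2" for x
  proof (cases "x = 0")
    case True
    then show ?thesis by (intro exI[of _ 0]) (simp add: psum_zero)
  next
    case False
    define s where "s = 2 * norm x / r"
    have s: "s > 0" using False r by (simp add: s_def)
    have "norm ((1 / s) *\<^sub>R x) < r" using False r by (simp add: s_def)
    then obtain y' where y': "y' \<in> psum_bounded M" "norm ((1 / s) *\<^sub>R x - y') < r / 4"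
      using approx_in_psum_bounded[OF ball, of "(1 / s) *\<^sub>R x" "r / 4"] r by auto
    have "norm (psum N (s *\<^sub>R y')) \<le> s * M" for N
      using y'(1) s unfolding psum_bounded_def by (simp add: psum_scaleR mult_left_mono)
    moreover have "s * M = c * norm x" by (simp add: c_def s_def)
    ultimately have "norm (psum N (s *\<^sub>R y')) \<le> c * norm x" for N by metis
    moreover have "norm (x - s *\<^sub>R y') \<le> norm x / 2"
    proof -
      have "x - s *\<^sub>R y' = s *\<^sub>R ((1 / s) *\<^sub>R x - y')" using s by (simp add: scaleR_diff_right)
      then have "norm (x - s *\<^sub>R y') \<le> s * (r / 4)"
        using y'(2) s by (simp add: mult_left_mono)
      also have "\<dots> = norm x / 2" using r by (simp add: s_def)
      finally show ?thesis .
    qed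
    ultimately show ?thesis by blast
  qed
  moreover have "c \<ge> 0" using M r by (simp add: c_def)
  ultimately show ?thesis by blast
qed

lemma psum_suminf_tendsto:
  assumes bound: "\<And>N k. norm (psum N (y k)) \<le> \<beta> k" and "summable \<beta>"
    and lim: "(\<lambda>K. \<Sum>k<K. y k) \<longlonglongrightarrow> x"
  shows "(\<lambda>N. \<Sum>k. psum N (y k)) \<longlonglongrightarrow> x"
proof (rule LIMSEQ_I)
  fix \<epsilon> :: real assume "\<epsilon> > 0"
  define X where "X K = (\<Sum>k<K. y k)" for K
  have "(\<lambda>K. \<Sum>k. \<beta> (k + K)) \<longlonglongrightarrow> 0" by (rule suminf_exist_split2[OF \<open>summable \<beta>\<close>])
  then have "\<forall>\<^sub>F K in sequentially. (\<Sum>k. \<beta> (k + K)) < \<epsilon> / 3"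
    using \<open>\<epsilon> > 0\<close> by (intro order_tendstoD(2)) auto
  moreover have "\<forall>\<^sub>F K in sequentially. norm (X K - x) < \<epsilon> / 3"
    using tendstoD[OF lim, of "\<epsilon> / 3"] \<open>\<epsilon> > 0\<close> by (simp add: X_def dist_norm)
  ultimately obtain K where tail: "(\<Sum>k. \<beta> (k + K)) < \<epsilon> / 3" and XK: "norm (X K - x) < \<epsilon> / 3"
    by (metis (no_types, lifting) eventually_conj_iff eventually_sequentially order.refl)
  obtain N0 where N0: "\<And>N. N \<ge> N0 \<Longrightarrow> norm (psum N (X K) - X K) < \<epsilon> / 3"
    using LIMSEQ_D[OF psum_tendsto[of "X K"], of "\<epsilon> / 3"] \<open>\<epsilon> > 0\<close> by (auto simp: dist_norm)
  have "norm ((\<Sum>k. psum N (y k)) - x) < \<epsilon>" if "N \<ge> N0" for N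
  proof -
    have norm_summable: "summable (\<lambda>k. norm (psum N (y k)))"
      by (rule summable_comparison_test'[OF \<open>summable \<beta>\<close>]) (simp add: bound)
    have "(\<Sum>k. psum N (y k)) = (\<Sum>k. psum N (y (k + K))) + psum N (X K)"
      using suminf_split_initial_segment[OF summable_norm_cancel[OF norm_summable]]
      by (simp add: X_def psum_sum)
    then have "(\<Sum>k. psum N (y k)) - x =
        (\<Sum>k. psum N (y (k + K))) + (psum N (X K) - X K) + (X K - x)" by simp
    then have "norm ((\<Sum>k. psum N (y k)) - x) \<le>
        norm (\<Sum>k. psum N (y (k + K))) + norm (psum N (X K) - X K) + norm (X K - x)"
      by (metis norm_triangle_le order_refl add_mono)
    also have "norm (\<Sum>k. psum N (y (k + K))) \<le> (\<Sum>k. \<beta> (k + K))"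
    proof -
      note tail_summable = summable_ignore_initial_segment[OF norm_summable, of K]
      have "norm (\<Sum>k. psum N (y (k + K))) \<le> (\<Sum>k. norm (psum N (y (k + K))))"
        by (rule summable_norm[OF tail_summable])
      also have "\<dots> \<le> (\<Sum>k. \<beta> (k + K))"
        by (rule suminf_le[OF bound tail_summable summable_ignore_initial_segment[OF \<open>summable \<beta>\<close>]])
      finally show ?thesis .
    qed
    finally show ?thesis using tail XK N0[OF that] by linarith
  qed
  then show "\<exists>N0. \<forall>N\<ge>N0. norm ((\<Sum>k. psum N (y k)) - x) < \<epsilon>" by blast
qed

lemma psum_suminf:
  assumes bound: "\<And>N k. norm (psum N (y k)) \<le> \<beta> k" and "summable \<beta>"
    and lim: "(\<lambda>K. \<Sum>k<K. y k) \<longlonglongrightarrow> x"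
  shows "psum N x = (\<Sum>k. psum N (y k))"
proof -
  define b where "b i = (\<Sum>k. coord (y k) i)" for i
  have coord_summable: "summable (\<lambda>k. coord (y k) i)" for i
  proof (rule summable_comparison_test')
    show "summable (\<lambda>k. 2 * \<beta> k / norm (e i))" using \<open>summable \<beta>\<close> by (intro summable_divide summable_mult)
    show "norm (coord (y k) i) \<le> 2 * \<beta> k / norm (e i)" for k
      using abs_coord_le[OF bound, of k i] basis_nonzero[of i] by (simp add: field_simps)
  qed
  have partial_sums: "(\<Sum>i<M. b i *\<^sub>R e i) = (\<Sum>k. psum M (y k))" for M
  proof -
    have "(\<Sum>i<M. b i *\<^sub>R e i) = (\<Sum>i<M. \<Sum>k. coord (y k) i *\<^sub>R e i)"
      unfolding b_def by (simp add: suminf_scaleR_left[OF coord_summable])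
    also have "\<dots> = (\<Sum>k. \<Sum>i<M. coord (y k) i *\<^sub>R e i)"
      by (rule suminf_sum[symmetric]) (intro summable_scaleR_left coord_summable)
    finally show ?thesis by (simp add: psum_def)
  qed
  have "coord x = b"
    using psum_suminf_tendsto[OF bound \<open>summable \<beta>\<close> lim]
    by (intro coord_unique) (simp add: partial_sums)
  then show ?thesis by (simp add: psum_def partial_sums)
qed

text \<open>The terms approximate the successive remainders via \<open>half_approx_by_psum_bounded\<close>.\<close>
lemma psum_geometric_decomposition:
  "\<exists>c\<ge>0. \<forall>x. \<exists>y. (\<forall>N k. norm (psum N (y k)) \<le> c * norm x * (1/2) ^ k) \<and> (\<lambda>K. \<Sum>k<K. y k) \<longlonglongrightarrow> x"
proof -
  obtain c g where "c \<ge> 0" and g_bound: "\<And>x N. norm (psum N (g x)) \<le> c * norm x"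
    and g_approx: "\<And>x. norm (x - g x) \<le> norm x / 2"
    using half_approx_by_psum_bounded by metis
  have "\<exists>y. (\<forall>N k. norm (psum N (y k)) \<le> c * norm x * (1/2) ^ k) \<and> (\<lambda>K. \<Sum>k<K. y k) \<longlonglongrightarrow> x" for x
  proof -
    define rem where "rem k = ((\<lambda>v. v - g v) ^^ k) x" for k
    have rem_Suc: "rem (Suc k) = rem k - g (rem k)" for k by (simp add: rem_def)
    have rem_bound: "norm (rem k) \<le> norm x * (1/2) ^ k" for k
    proof (induction k)
      case (Suc k)
      then show ?case using g_approx[of "rem k"] by (simp add: rem_Suc)
    qed (simp add: rem_def)
    have "norm (psum N (g (rem k))) \<le> c * norm x * (1/2) ^ k" for N k
      using order_trans[OF g_bound mult_left_mono[OF rem_bound \<open>c \<ge> 0\<close>]] by (simp add: mult_ac)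
    moreover have "(\<lambda>K. \<Sum>k<K. g (rem k)) \<longlonglongrightarrow> x"
    proof -
      have "(\<Sum>k<K. g (rem k)) = x - rem K" for K by (induction K) (simp_all add: rem_Suc rem_def)
      moreover have "(\<lambda>k. norm x * (1/2::real) ^ k) \<longlonglongrightarrow> 0"
        by (intro tendsto_mult_right_zero LIMSEQ_power_zero) simp
      then have "rem \<longlonglongrightarrow> 0"
        by (rule Lim_null_comparison[rotated]) (simp add: rem_bound always_eventually)
      ultimately show ?thesis using tendsto_diff[OF tendsto_const[of x], of rem 0] by simp
    qed
    ultimately show ?thesis by (intro exI[of _ "\<lambda>k. g (rem k)"]) simp
  qed
  with \<open>c \<ge> 0\<close> show ?thesis by blast
qed

lemma basis_constant: "\<exists>C\<ge>1. \<forall>N x. norm (psum N x) \<le> C * norm x"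
proof -
  obtain c where "c \<ge> 0" and decomp: "\<forall>x. \<exists>y. (\<forall>N k. norm (psum N (y k)) \<le> c * norm x * (1/2) ^ k) \<and>
      (\<lambda>K. \<Sum>k<K. y k) \<longlonglongrightarrow> x"
    using psum_geometric_decomposition by blast
  have "norm (psum N x) \<le> max 1 (2 * c) * norm x" for N x
  proof -
    define \<beta> where "\<beta> k = c * norm x * (1/2) ^ k" for k
    obtain y where bound: "\<And>N k. norm (psum N (y k)) \<le> \<beta> k" and lim: "(\<lambda>K. \<Sum>k<K. y k) \<longlonglongrightarrow> x"
      using decomp unfolding \<beta>_def by blast
    have "summable \<beta>" unfolding \<beta>_def by (intro summable_mult summable_geometric) simp
    have norm_summable: "summable (\<lambda>k. norm (psum N (y k)))"
      by (rule summable_comparison_test'[OF \<open>summable \<beta>\<close>]) (simp add: bound)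
    have "norm (psum N x) = norm (\<Sum>k. psum N (y k))"
      using psum_suminf[OF bound \<open>summable \<beta>\<close> lim] by simp
    also have "\<dots> \<le> (\<Sum>k. norm (psum N (y k)))" by (rule summable_norm[OF norm_summable])
    also have "\<dots> \<le> suminf \<beta>" by (rule suminf_le[OF bound norm_summable \<open>summable \<beta>\<close>])
    also have "\<dots> = 2 * c * norm x" unfolding \<beta>_def by (simp add: suminf_mult suminf_geometric)
    also have "\<dots> \<le> max 1 (2 * c) * norm x" by (intro mult_right_mono) auto
    finally show ?thesis .
  qed
  then show ?thesis by (intro exI[of _ "max 1 (2 * c)"]) simp
qed

end

lemma inf_dim_subspace_kernel:
  fixes f :: "'a::real_vector \<Rightarrow> real"
  assumes Y: "inf_dim_subspace Y" and f: "linear f"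
  shows "inf_dim_subspace {y\<in>Y. f y = 0}"
proof -
  have sY: "subspace Y" and Y_inf: "\<not> (\<exists>B. finite B \<and> Y = span B)"
    using Y by (simp_all add: inf_dim_subspace_def)
  have "{y\<in>Y. f y = 0} = Y \<inter> {y. f y = 0}" by blast
  then have sub: "subspace {y\<in>Y. f y = 0}" using subspace_inter[OF sY linear_subspace_kernel[OF f]] by simp
  have "\<not> (\<exists>B. finite B \<and> {y\<in>Y. f y = 0} = span B)"
  proof
    assume "\<exists>B. finite B \<and> {y\<in>Y. f y = 0} = span B"
    then obtain B where "finite B" and B: "{y\<in>Y. f y = 0} = span B" by blast
    show False
    proof (cases "\<forall>y\<in>Y. f y = 0")
      case True
      then have "Y = span B" using B by auto
      with \<open>finite B\<close> Y_inf show False by blast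
    next
      case False
      then obtain y0 where y0: "y0 \<in> Y" "f y0 \<noteq> 0" by blast
      have "Y = span (insert y0 B)"
      proof
        have "B \<subseteq> Y" using B span_superset by blast
        then show "span (insert y0 B) \<subseteq> Y" using y0 sY by (intro span_minimal) auto
        show "Y \<subseteq> span (insert y0 B)"
        proof
          fix y assume "y \<in> Y"
          define d where "d = y - (f y / f y0) *\<^sub>R y0"
          have "d \<in> Y" using \<open>y \<in> Y\<close> y0 sY by (simp add: d_def subspace_diff subspace_scale)
          moreover have "f d = 0" using y0 by (simp add: d_def linear_diff[OF f] linear_scale[OF f])
          ultimately have "d \<in> span (insert y0 B)" using B span_mono[of B "insert y0 B"] by blast
          moreover have "(f y / f y0) *\<^sub>R y0 \<in> span (insert y0 B)"
            by (simp add: span_base span_scale)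
          ultimately have "d + (f y / f y0) *\<^sub>R y0 \<in> span (insert y0 B)" by (rule span_add)
          then show "y \<in> span (insert y0 B)" by (simp add: d_def)
        qed
      qed
      with \<open>finite B\<close> Y_inf show False by blast
    qed
  qed
  with sub show ?thesis by (simp add: inf_dim_subspace_def)
qed

lemma additive_homogeneous_on_sum:
  fixes T :: "'a::real_vector \<Rightarrow> 'b::real_vector" and n :: nat
  assumes F: "subspace F" and add: "\<forall>x\<in>F. \<forall>y\<in>F. T (x + y) = T x + T y"
    and scale: "\<forall>c. \<forall>x\<in>F. T (c *\<^sub>R x) = c *\<^sub>R T x" and f: "\<And>j. j < n \<Longrightarrow> f j \<in> F"
  shows "T (\<Sum>j<n. c j *\<^sub>R f j) = (\<Sum>j<n. c j *\<^sub>R T (f j))"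
  using f
proof (induction n)
  case 0
  have "T (0 *\<^sub>R 0) = 0 *\<^sub>R T 0" using scale F subspace_0 by blast
  then show ?case by simp
next
  case (Suc n)
  have "(\<Sum>j<n. c j *\<^sub>R f j) \<in> F" "c n *\<^sub>R f n \<in> F"
    using Suc.prems F by (auto intro!: subspace_sum subspace_scale)
  then show ?case using Suc add scale by simp
qed

lemma embeds_with_const_list:
  assumes emb: "embeds_with_const (span (set fs)) Y K" and Y: "subspace Y"
    and nonzero: "f \<in> set fs" "f \<noteq> 0"
  shows "\<exists>ws. length ws = length fs \<and> set ws \<subseteq> Y \<and>
    (\<forall>c. norm (\<Sum>i<length fs. c i *\<^sub>R ws ! i) \<le> norm (\<Sum>i<length fs. c i *\<^sub>R fs ! i) \<and>
         norm (\<Sum>i<length fs. c i *\<^sub>R fs ! i) \<le> K * norm (\<Sum>i<length fs. c i *\<^sub>R ws ! i))"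
proof -
  let ?F = "span (set fs)"
  obtain T A B where add: "\<forall>x\<in>?F. \<forall>y\<in>?F. T (x + y) = T x + T y"
    and scale: "\<forall>c. \<forall>x\<in>?F. T (c *\<^sub>R x) = c *\<^sub>R T x" and TY: "T ` ?F \<subseteq> Y"
    and AB: "A * B \<le> K" and bounds: "\<forall>x\<in>?F. norm (T x) \<le> A * norm x \<and> norm x \<le> B * norm (T x)"
    using emb unfolding embeds_with_const_def by blast
  have "A > 0"
  proof (rule ccontr)
    assume "\<not> A > 0"
    have "f \<in> ?F" using nonzero(1) by (rule span_base)
    then have "norm (T f) \<le> A * norm f" "norm f \<le> B * norm (T f)" using bounds by auto
    moreover have "A * norm f \<le> 0" using \<open>\<not> A > 0\<close> by (simp add: mult_nonpos_nonneg)
    ultimately have "norm (T f) \<le> 0" by linarith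
    then have "norm f \<le> 0" using \<open>norm f \<le> B * norm (T f)\<close> by simp
    then show False using nonzero(2) by simp
  qed
  define ws where "ws = map (\<lambda>v. (1 / A) *\<^sub>R T v) fs"
  have in_F: "fs ! i \<in> ?F" if "i < length fs" for i using that by (simp add: span_base)
  have "set ws \<subseteq> Y" using TY span_base by (auto simp: ws_def intro!: subspace_scale[OF Y])
  moreover have "norm (\<Sum>i<length fs. c i *\<^sub>R ws ! i) \<le> norm (\<Sum>i<length fs. c i *\<^sub>R fs ! i) \<and>
      norm (\<Sum>i<length fs. c i *\<^sub>R fs ! i) \<le> K * norm (\<Sum>i<length fs. c i *\<^sub>R ws ! i)" for c
  proof -
    define x where "x = (\<Sum>i<length fs. c i *\<^sub>R fs ! i)"
    have "x \<in> ?F" unfolding x_def using in_F by (intro subspace_sum subspace_scale) auto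
    have "T x = (\<Sum>i<length fs. c i *\<^sub>R T (fs ! i))"
      unfolding x_def by (rule additive_homogeneous_on_sum[OF subspace_span add scale in_F])
    then have "(\<Sum>i<length fs. c i *\<^sub>R ws ! i) = (1 / A) *\<^sub>R T x"
      by (simp add: ws_def scaleR_sum_right)
    moreover have "norm ((1 / A) *\<^sub>R T x) \<le> norm x"
      using bounds \<open>x \<in> ?F\<close> \<open>A > 0\<close> by (simp add: divide_le_eq mult.commute)
    moreover have "norm x \<le> K * norm ((1 / A) *\<^sub>R T x)"
    proof -
      have "norm x \<le> (A * B) * norm ((1 / A) *\<^sub>R T x)"
        using bounds \<open>x \<in> ?F\<close> \<open>A > 0\<close> by simp
      also have "\<dots> \<le> K * norm ((1 / A) *\<^sub>R T x)" by (rule mult_right_mono[OF AB norm_ge_zero])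
      finally show ?thesis .
    qed
    ultimately show ?thesis unfolding x_def by simp
  qed
  ultimately show ?thesis by (intro exI[of _ ws]) (simp add: ws_def)
qed

lemma mem_emb_tree_iff:
  "vs \<in> emb_tree y Y K \<longleftrightarrow> set vs \<subseteq> Y \<and> (\<forall>c.
     (1 / K) * norm (\<Sum>i<length vs. c i *\<^sub>R vs ! i) \<le> norm (\<Sum>i<length vs. c i *\<^sub>R y i) \<and>
     norm (\<Sum>i<length vs. c i *\<^sub>R y i) \<le> K * norm (\<Sum>i<length vs. c i *\<^sub>R vs ! i))"
proof -
  have "(\<Sum>i<length vs. c i *\<^sub>R map y [0..<length vs] ! i) = (\<Sum>i<length vs. c i *\<^sub>R y i)" for c
    by (intro sum.cong) auto
  then show ?thesis unfolding emb_tree_def seq_equiv_def by simp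
qed

lemma Nil_in_emb_tree: "[] \<in> emb_tree y Y K"
  by (simp add: mem_emb_tree_iff)

lemma emb_tree_mono:
  assumes "1 \<le> K" "K \<le> K'"
  shows "emb_tree y Y K \<subseteq> emb_tree y Y K'"
proof
  fix vs assume vs: "vs \<in> emb_tree y Y K"
  have "(1 / K') * a \<le> b \<and> b \<le> K' * a" if "(1 / K) * a \<le> b" "b \<le> K * a" "a \<ge> 0" for a b :: real
  proof
    have "(1 / K') * a \<le> (1 / K) * a" using assms that(3) by (intro mult_right_mono divide_left_mono) auto
    then show "(1 / K') * a \<le> b" using that(1) by linarith
    have "K * a \<le> K' * a" using assms that(3) by (intro mult_right_mono) auto
    then show "b \<le> K' * a" using that(2) by linarith
  qed
  with vs show "vs \<in> emb_tree y Y K'" unfolding mem_emb_tree_iff by (simp add: norm_ge_zero)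
qed

lemma emb_tree_prefix_closed:
  assumes vs: "vs \<in> emb_tree y Y K" and "prefix ws vs"
  shows "ws \<in> emb_tree y Y K"
proof -
  obtain us where vs_eq: "vs = ws @ us" using \<open>prefix ws vs\<close> by (auto elim: prefixE)
  have "(1 / K) * norm (\<Sum>i<length ws. c i *\<^sub>R ws ! i) \<le> norm (\<Sum>i<length ws. c i *\<^sub>R y i) \<and>
      norm (\<Sum>i<length ws. c i *\<^sub>R y i) \<le> K * norm (\<Sum>i<length ws. c i *\<^sub>R ws ! i)" for c
  proof -
    define c' where "c' i = (if i < length ws then c i else 0)" for i
    have "(\<Sum>i<length vs. c' i *\<^sub>R vs ! i) = (\<Sum>i<length ws. c i *\<^sub>R ws ! i)"
      and "(\<Sum>i<length vs. c' i *\<^sub>R y i) = (\<Sum>i<length ws. c i *\<^sub>R y i)"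
      by (auto simp: c'_def vs_eq nth_append split: if_splits intro!: sum.mono_neutral_cong_right)
    with vs show ?thesis unfolding mem_emb_tree_iff by metis
  qed
  with vs show ?thesis unfolding mem_emb_tree_iff by (simp add: vs_eq)
qed

lemma rho_ge_if_extension:
  assumes prefix_closed: "\<forall>t\<in>T. \<forall>s. prefix s t \<longrightarrow> s \<in> T"
    and "prefix t t'" "t' \<in> T" "length t' = length t + n" "rho_ge T m 0 t'"
  shows "rho_ge T m n t"
  using assms(2-5)
proof (induction n arbitrary: t)
  case 0
  then show ?case using prefix_length_less[of t t'] by (auto simp: strict_prefix_def)
next
  case (Suc n)
  define t'' where "t'' = take (Suc (length t)) t'"
  have "prefix t'' t'" by (simp add: t''_def take_is_prefix)
  moreover have "length t'' = Suc (length t)" using Suc.prems(3) by (simp add: t''_def)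
  moreover have "prefix t t''"
    using prefix_length_prefix[OF Suc.prems(1) \<open>prefix t'' t'\<close>] calculation by simp
  ultimately have "strict_prefix t t''" "t'' \<in> T" "rho_ge T m n t''"
    using prefix_closed Suc by (auto simp: strict_prefix_def)
  moreover have "t \<in> T" using prefix_closed Suc.prems(1,2) by blast
  ultimately show ?case by auto
qed

lemma le_extension_constant:
  fixes C K K0 :: real
  assumes "1 \<le> C" "1 \<le> K" "0 \<le> K0"
  shows "K \<le> 5 * C * (K + K0)"
  using assms mult_mono[of 1 C K "5 * (K + K0)"] by (simp add: mult_ac)

text \<open>Along the iterates \<open>K\<^sub>j = f\<^sup>j 1\<close>, a node of the tree \<open>T K\<^sub>j\<close> has rank at least
  \<open>\<omega> \<cdot> m + n\<close> in the tree \<open>T K\<^sub>j\<^sub>+\<^sub>m\<^sub>+\<^sub>1\<close>.\<close>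
lemma rank_gt_if_extendable:
  fixes T :: "real \<Rightarrow> 'b list set"
  assumes prefix_closed: "\<And>K s t. t \<in> T K \<Longrightarrow> prefix s t \<Longrightarrow> s \<in> T K"
    and mono: "\<And>K K'. 1 \<le> K \<Longrightarrow> K \<le> K' \<Longrightarrow> T K \<subseteq> T K'"
    and f_ge: "\<And>K. 1 \<le> K \<Longrightarrow> K \<le> f K"
    and extend: "\<And>K s n. 1 \<le> K \<Longrightarrow> s \<in> T K \<Longrightarrow> \<exists>t\<in>T (f K). prefix s t \<and> length t = length s + n"
    and "[] \<in> T 1"
  shows "\<exists>K\<ge>1. rank_gt (T K) m n"
proof -
  define Ks where "Ks j = (f ^^ j) 1" for j
  have prefix_closed': "\<forall>t\<in>T K. \<forall>s. prefix s t \<longrightarrow> s \<in> T K" for K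
    using prefix_closed by blast
  have Ks_Suc: "Ks (Suc j) = f (Ks j)" for j by (simp add: Ks_def)
  have Ks_ge1: "1 \<le> Ks j" for j
    by (induction j) (auto simp: Ks_def intro: order_trans f_ge)
  have Ks_mono: "Ks j \<le> Ks j'" if "j \<le> j'" for j j'
    using lift_Suc_mono_le[of Ks, OF _ that] f_ge Ks_ge1 by (simp add: Ks_Suc)
  have rho: "rho_ge (T (Ks M)) m n t" if "j + m + 1 \<le> M" "t \<in> T (Ks j)" for j M t
    using that
  proof (induction m arbitrary: j t n)
    case 0
    obtain t' where t': "t' \<in> T (Ks (Suc j))" "prefix t t'" "length t' = length t + n"
      using extend[OF Ks_ge1 \<open>t \<in> T (Ks j)\<close>, of n] by (auto simp: Ks_Suc)
    moreover have "T (Ks (Suc j)) \<subseteq> T (Ks M)" using 0 by (intro mono Ks_ge1 Ks_mono) simp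
    ultimately have "t' \<in> T (Ks M)" by blast
    from rho_ge_if_extension[OF prefix_closed'[of "Ks M"] t'(2) this t'(3)] \<open>t' \<in> T (Ks M)\<close>
    show ?case by simp
  next
    case (Suc m)
    obtain t' where t': "t' \<in> T (Ks (Suc j))" "prefix t t'" "length t' = length t + n"
      using extend[OF Ks_ge1 \<open>t \<in> T (Ks j)\<close>, of n] by (auto simp: Ks_Suc)
    moreover have "T (Ks (Suc j)) \<subseteq> T (Ks M)" using Suc by (intro mono Ks_ge1 Ks_mono) simp
    ultimately have "t' \<in> T (Ks M)" by blast
    moreover have "rho_ge (T (Ks M)) m n' t'" for n' using Suc.IH[of "Suc j" t' n'] Suc.prems t' by simp
    ultimately show ?case by (intro rho_ge_if_extension[OF prefix_closed'[of "Ks M"] t'(2) _ t'(3)]) simp_all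
  qed
  have "[] \<in> T (Ks 0)" using \<open>[] \<in> T 1\<close> by (simp add: Ks_def)
  then have "[] \<in> T (Ks (m + 1))" and "rho_ge (T (Ks (m + 1))) m n []"
    using mono[OF Ks_ge1 Ks_mono[of 0 "m + 1"]] rho[of 0 "m + 1"] by auto
  then have "rank_gt (T (Ks (m + 1))) m n" unfolding rank_gt_def by blast
  then show ?thesis using Ks_ge1 by blast
qed

lemma sum_lessThan_add: "(\<Sum>i<m + n. f i) = (\<Sum>i<m. f i) + (\<Sum>j<n. f (m + j))"
  for f :: "nat \<Rightarrow> 'b::comm_monoid_add"
  by (induction n) (simp_all add: add_ac)

lemma sum_append_nth:
  "(\<Sum>i<length vs + length ws. c i *\<^sub>R (vs @ ws) ! i) =
    (\<Sum>i<length vs. c i *\<^sub>R vs ! i) + (\<Sum>j<length ws. c (length vs + j) *\<^sub>R ws ! j)"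
  by (simp add: sum_lessThan_add nth_append)

text \<open>The estimate behind the extension step: \<open>u, x\<close> are corresponding combinations of the old
  vectors and of the old block vectors, \<open>w, y\<close> those of the new ones.\<close>
lemma norm_add_equiv:
  fixes u w x y :: "'a::real_normed_vector"
  assumes "C \<ge> 1" "K \<ge> 1" "K0 \<ge> 1"
    and u: "norm u \<le> 2 * C * norm (u + w)" and x: "norm x \<le> C * norm (x + y)"
    and xu: "norm x \<le> K * norm u" and ux: "norm u \<le> K * norm x"
    and wy: "norm w \<le> norm y" and yw: "norm y \<le> K0 * norm w"
  shows "(1 / (5 * C * (K + K0))) * norm (u + w) \<le> norm (x + y)"
    and "norm (x + y) \<le> 5 * C * (K + K0) * norm (u + w)"
proof -
  have CK: "C * K \<ge> 1" "C * K0 \<ge> 1" "C \<le> C * K" "K0 \<le> C * K0"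
    using assms(1-3) mult_mono[of 1 C 1 K] mult_mono[of 1 C 1 K0] by simp_all
  have w: "norm w \<le> (2 * C + 1) * norm (u + w)"
    using norm_triangle_ineq4[of "u + w" u] u by (simp add: algebra_simps)
  have y: "norm y \<le> (C + 1) * norm (x + y)"
    using norm_triangle_ineq4[of "x + y" x] x by (simp add: algebra_simps)
  have "norm (u + w) \<le> K * norm x + norm y" using norm_triangle_ineq[of u w] ux wy by simp
  also have "\<dots> \<le> K * (C * norm (x + y)) + (C + 1) * norm (x + y)"
    using x y \<open>K \<ge> 1\<close> by (intro add_mono mult_left_mono) auto
  also have "\<dots> = (C * K + C + 1) * norm (x + y)" by (simp add: algebra_simps)
  also have "\<dots> \<le> 5 * C * (K + K0) * norm (x + y)"
    using CK by (intro mult_right_mono) (simp_all add: algebra_simps)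
  finally have "norm (u + w) \<le> norm (x + y) * (5 * C * (K + K0))" by (simp only: mult.commute)
  then have "norm (u + w) / (5 * C * (K + K0)) \<le> norm (x + y)"
    using assms(1-3) by (intro mult_imp_div_pos_le) simp_all
  then show "(1 / (5 * C * (K + K0))) * norm (u + w) \<le> norm (x + y)" by simp
  have "norm (x + y) \<le> K * norm u + K0 * norm w" using norm_triangle_ineq[of x y] xu yw by simp
  also have "\<dots> \<le> K * (2 * C * norm (u + w)) + K0 * ((2 * C + 1) * norm (u + w))"
    using u w assms(2,3) by (intro add_mono mult_left_mono) auto
  also have "\<dots> = (2 * (C * K) + 2 * (C * K0) + K0) * norm (u + w)" by (simp add: algebra_simps)
  also have "\<dots> \<le> 5 * C * (K + K0) * norm (u + w)"
    using CK by (intro mult_right_mono) (simp_all add: algebra_simps)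
  finally show "norm (x + y) \<le> 5 * C * (K + K0) * norm (u + w)" .
qed

context schauder
begin

lemma inf_dim_subspace_coord_tail:
  assumes "inf_dim_subspace Y"
  shows "inf_dim_subspace {y\<in>Y. \<forall>i<r. coord y i = 0}"
proof (induction r)
  case 0
  then show ?case using assms by simp
next
  case (Suc r)
  have "{y\<in>Y. \<forall>i<Suc r. coord y i = 0} = {y\<in>{y\<in>Y. \<forall>i<r. coord y i = 0}. coord y r = 0}"
    by (auto simp: less_Suc_eq)
  then show ?case using inf_dim_subspace_kernel[OF Suc linear_coord] by simp
qed

end

locale block_sequence = schauder e for e :: "nat \<Rightarrow> 'a::banach" +
  fixes C :: real and p :: "nat \<Rightarrow> nat" and a :: "nat \<Rightarrow> real" and z :: "nat \<Rightarrow> 'a"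
  assumes C_ge: "C \<ge> 1" and norm_psum_le: "\<And>N x. norm (psum N x) \<le> C * norm x"
    and strict_mono_p: "strict_mono p"
    and z_eq: "\<And>n. z n = (\<Sum>i\<in>{p n..<p (Suc n)}. a i *\<^sub>R e i)" and z_nonzero: "\<And>n. z n \<noteq> 0"
begin

lemma z_eq_prefix_sum: "z n = (\<Sum>i<p (Suc n). (if p n \<le> i then a i else 0) *\<^sub>R e i)"
proof -
  have "(\<Sum>i<p (Suc n). (if p n \<le> i then a i else 0) *\<^sub>R e i) =
      (\<Sum>i<p (Suc n). if p n \<le> i then a i *\<^sub>R e i else 0)"
    by (intro sum.cong) auto
  also have "\<dots> = (\<Sum>i\<in>{i\<in>{..<p (Suc n)}. p n \<le> i}. a i *\<^sub>R e i)"
    by (rule sum.inter_filter[symmetric]) simp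
  also have "{i\<in>{..<p (Suc n)}. p n \<le> i} = {p n..<p (Suc n)}" by auto
  finally show ?thesis by (simp add: z_eq)
qed

lemma psum_z_above: "p (Suc n) \<le> q \<Longrightarrow> psum q (z n) = z n"
  by (simp add: z_eq_prefix_sum[of n] psum_finite_sum min_absorb2)

lemma psum_z_below: "q \<le> p n \<Longrightarrow> psum q (z n) = 0"
  unfolding z_eq_prefix_sum[of n] psum_finite_sum by (intro sum.neutral) auto

lemma psum_block_sum: "psum (p j) (\<Sum>n<k. c n *\<^sub>R z n) = (\<Sum>n<min j k. c n *\<^sub>R z n)"
proof -
  have "c n *\<^sub>R psum (p j) (z n) = (if n < j then c n *\<^sub>R z n else 0)" for n
  proof (cases "n < j")
    case True
    then have "p (Suc n) \<le> p j" using strict_mono_p by (simp add: strict_mono_less_eq)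
    then show ?thesis using True by (simp add: psum_z_above)
  next
    case False
    then have "p j \<le> p n" using strict_mono_p by (simp add: strict_mono_less_eq)
    then show ?thesis using False by (simp add: psum_z_below)
  qed
  then have "psum (p j) (\<Sum>n<k. c n *\<^sub>R z n) = (\<Sum>n<k. if n < j then c n *\<^sub>R z n else 0)"
    by (simp add: psum_sum psum_scaleR)
  also have "\<dots> = (\<Sum>n\<in>{n\<in>{..<k}. n < j}. c n *\<^sub>R z n)"
    by (rule sum.inter_filter[symmetric]) simp
  also have "{n\<in>{..<k}. n < j} = {..<min j k}" by auto
  finally show ?thesis .
qed

lemma norm_block_sum_initial_le: "norm (\<Sum>n<k. c n *\<^sub>R z n) \<le> C * norm (\<Sum>n<k + N. c n *\<^sub>R z n)"
  using psum_block_sum[where j = k and k = "k + N" and c = c] norm_psum_le[of "p k" "\<Sum>n<k + N. c n *\<^sub>R z n"] by simp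

lemma abs_block_coeff_le:
  assumes "i < L"
  shows "\<bar>c i\<bar> * norm (z i) \<le> 2 * C * norm (\<Sum>n<L. c n *\<^sub>R z n)"
proof -
  define v where "v = (\<Sum>n<L. c n *\<^sub>R z n)"
  have "c i *\<^sub>R z i = psum (p (Suc i)) v - psum (p i) v"
    using assms by (simp add: v_def psum_block_sum min_absorb1)
  then have "\<bar>c i\<bar> * norm (z i) \<le> norm (psum (p (Suc i)) v) + norm (psum (p i) v)"
    using norm_triangle_ineq4 by (metis norm_scaleR)
  also have "\<dots> \<le> 2 * C * norm v"
    using norm_psum_le[of "p (Suc i)" v] norm_psum_le[of "p i" v] by simp
  finally show ?thesis by (simp add: v_def)
qed

text \<open>Coordinates of the finitely many old vectors are controlled through the block basis, so
  a late enough partial sum projection almost fixes their span.\<close>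
lemma psum_almost_fixes_emb_tree:
  assumes vs: "vs \<in> emb_tree z Y K"
  shows "\<exists>r. \<forall>c. norm ((\<Sum>i<length vs. c i *\<^sub>R vs ! i) - psum r (\<Sum>i<length vs. c i *\<^sub>R vs ! i))
      \<le> norm (\<Sum>i<length vs. c i *\<^sub>R vs ! i) / 2"
proof -
  define k where "k = length vs"
  define \<gamma> where "\<gamma> i = 2 * C * K / norm (z i)" for i
  define D where "D r = (\<Sum>i<k. \<gamma> i * norm (vs ! i - psum r (vs ! i)))" for r
  have "(\<lambda>r. vs ! i - psum r (vs ! i)) \<longlonglongrightarrow> 0" for i
    using tendsto_diff[OF tendsto_const psum_tendsto, of "vs ! i" "vs ! i"] by simp
  then have "D \<longlonglongrightarrow> (\<Sum>i<k. \<gamma> i * 0)"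
    unfolding D_def by (intro tendsto_sum tendsto_mult tendsto_const tendsto_norm_zero)
  then obtain r where r: "D r < 1/2"
    using order_tendstoD(2)[of D 0 sequentially "1/2"] by (auto simp: eventually_sequentially)
  have "norm (u - psum r u) \<le> norm u / 2" if u: "u = (\<Sum>i<k. c i *\<^sub>R vs ! i)" for c u
  proof -
    have coeff: "\<bar>c i\<bar> \<le> \<gamma> i * norm u" if "i < k" for i
    proof -
      have "\<bar>c i\<bar> * norm (z i) \<le> 2 * C * norm (\<Sum>n<k. c n *\<^sub>R z n)"
        by (rule abs_block_coeff_le[OF that])
      also have "\<dots> \<le> 2 * C * (K * norm u)"
        using vs C_ge u unfolding mem_emb_tree_iff k_def by (intro mult_left_mono) auto
      finally show ?thesis using z_nonzero[of i] by (simp add: \<gamma>_def field_simps)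
    qed
    have "u - psum r u = (\<Sum>i<k. c i *\<^sub>R (vs ! i - psum r (vs ! i)))"
      by (simp add: u psum_sum psum_scaleR scaleR_diff_right sum_subtractf)
    then have "norm (u - psum r u) \<le> (\<Sum>i<k. norm (c i *\<^sub>R (vs ! i - psum r (vs ! i))))"
      by (simp only: norm_sum)
    also have "\<dots> = (\<Sum>i<k. \<bar>c i\<bar> * norm (vs ! i - psum r (vs ! i)))" by simp
    also have "\<dots> \<le> (\<Sum>i<k. \<gamma> i * norm u * norm (vs ! i - psum r (vs ! i)))"
      using coeff by (intro sum_mono mult_right_mono) auto
    also have "\<dots> = norm u * D r" by (simp add: D_def sum_distrib_left mult_ac)
    also have "\<dots> \<le> norm u * (1/2)" using r by (intro mult_left_mono) auto
    finally show ?thesis by simp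
  qed
  then show ?thesis unfolding k_def by blast
qed

lemma blocks_embed_in_coord_tail:
  assumes Y: "inf_dim_subspace Y" and "N > 0"
    and loc_min: "\<And>F Y' :: 'a set. fin_dim_subspace F \<Longrightarrow> inf_dim_subspace Y' \<Longrightarrow> embeds_with_const F Y' K0"
  shows "\<exists>ws. length ws = N \<and> set ws \<subseteq> {y\<in>Y. \<forall>i<r. coord y i = 0} \<and>
    (\<forall>c. norm (\<Sum>j<N. c j *\<^sub>R ws ! j) \<le> norm (\<Sum>j<N. c j *\<^sub>R z (k + j)) \<and>
         norm (\<Sum>j<N. c j *\<^sub>R z (k + j)) \<le> K0 * norm (\<Sum>j<N. c j *\<^sub>R ws ! j))"
proof -
  define fs where "fs = map (\<lambda>j. z (k + j)) [0..<N]"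
  have "fin_dim_subspace (span (set fs))" unfolding fin_dim_subspace_def by auto
  moreover have "inf_dim_subspace {y\<in>Y. \<forall>i<r. coord y i = 0}" by (rule inf_dim_subspace_coord_tail[OF Y])
  ultimately have "embeds_with_const (span (set fs)) {y\<in>Y. \<forall>i<r. coord y i = 0} K0"
    and "subspace {y\<in>Y. \<forall>i<r. coord y i = 0}"
    using loc_min by (simp_all add: inf_dim_subspace_def)
  moreover have "z (k + 0) \<in> set fs" using \<open>N > 0\<close> unfolding fs_def set_map by (intro imageI) simp
  ultimately obtain ws where "length ws = length fs" "set ws \<subseteq> {y\<in>Y. \<forall>i<r. coord y i = 0}"
    "\<And>c. norm (\<Sum>j<length fs. c j *\<^sub>R ws ! j) \<le> norm (\<Sum>j<length fs. c j *\<^sub>R fs ! j) \<and>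
        norm (\<Sum>j<length fs. c j *\<^sub>R fs ! j) \<le> K0 * norm (\<Sum>j<length fs. c j *\<^sub>R ws ! j)"
    using embeds_with_const_list[OF _ _ _ z_nonzero] by blast
  moreover have "length fs = N" by (simp add: fs_def)
  moreover have "(\<Sum>j<N. c j *\<^sub>R fs ! j) = (\<Sum>j<N. c j *\<^sub>R z (k + j))" for c
    by (auto simp: fs_def intro!: sum.cong)
  ultimately show ?thesis by auto
qed

text \<open>The new vectors are a copy, provided by local minimality, of the next block vectors inside
  the part of \<open>Y\<close> killed by the projection of \<open>psum_almost_fixes_emb_tree\<close>.\<close>
lemma emb_tree_extend:
  assumes vs: "vs \<in> emb_tree z Y K" and "1 \<le> K" "1 \<le> K0" and Y: "inf_dim_subspace Y"
    and loc_min: "\<And>F Y' :: 'a set. fin_dim_subspace F \<Longrightarrow> inf_dim_subspace Y' \<Longrightarrow> embeds_with_const F Y' K0"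
  shows "\<exists>t\<in>emb_tree z Y (5 * C * (K + K0)). prefix vs t \<and> length t = length vs + N"
proof (cases "N = 0")
  case True
  have "K \<le> 5 * C * (K + K0)" using le_extension_constant[OF C_ge \<open>1 \<le> K\<close>] \<open>1 \<le> K0\<close> by simp
  then have "vs \<in> emb_tree z Y (5 * C * (K + K0))" using vs emb_tree_mono[OF \<open>1 \<le> K\<close>] by blast
  then show ?thesis using True by auto
next
  case False
  define k where "k = length vs"
  obtain r where r: "\<And>c. norm ((\<Sum>i<k. c i *\<^sub>R vs ! i) - psum r (\<Sum>i<k. c i *\<^sub>R vs ! i))
      \<le> norm (\<Sum>i<k. c i *\<^sub>R vs ! i) / 2"
    using psum_almost_fixes_emb_tree[OF vs] unfolding k_def by blast
  obtain ws where ws: "length ws = N" "set ws \<subseteq> {y\<in>Y. \<forall>i<r. coord y i = 0}"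
    and ws_equiv: "\<And>c. norm (\<Sum>j<N. c j *\<^sub>R ws ! j) \<le> norm (\<Sum>j<N. c j *\<^sub>R z (k + j)) \<and>
        norm (\<Sum>j<N. c j *\<^sub>R z (k + j)) \<le> K0 * norm (\<Sum>j<N. c j *\<^sub>R ws ! j)"
    using blocks_embed_in_coord_tail[OF Y _ loc_min] False by blast
  have "(1 / (5 * C * (K + K0))) * norm (\<Sum>i<k + N. c i *\<^sub>R (vs @ ws) ! i)
      \<le> norm (\<Sum>i<k + N. c i *\<^sub>R z i) \<and>
    norm (\<Sum>i<k + N. c i *\<^sub>R z i) \<le> 5 * C * (K + K0) * norm (\<Sum>i<k + N. c i *\<^sub>R (vs @ ws) ! i)"
    for c
  proof -
    define u where "u = (\<Sum>i<k. c i *\<^sub>R vs ! i)"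
    define w where "w = (\<Sum>j<N. c (k + j) *\<^sub>R ws ! j)"
    define x where "x = (\<Sum>i<k. c i *\<^sub>R z i)"
    define y where "y = (\<Sum>j<N. c (k + j) *\<^sub>R z (k + j))"
    have "coord (ws ! j) i = 0" if "j < N" "i < r" for i j
    proof -
      have "ws ! j \<in> {y\<in>Y. \<forall>i<r. coord y i = 0}" using ws nth_mem[of j ws] that(1) by blast
      then show ?thesis using that(2) by blast
    qed
    then have "coord w i = 0" if "i < r" for i
      using that by (simp add: w_def linear_sum[OF linear_coord] coord_scaleR)
    then have "psum r w = 0" by (simp add: psum_def)
    then have "norm (psum r u) \<le> C * norm (u + w)" using norm_psum_le[of r "u + w"] by (simp add: psum_add)
    then have u_bound: "norm u \<le> 2 * C * norm (u + w)"
      using r[of c] norm_triangle_ineq2[of u "psum r u"] unfolding u_def by linarith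
    have x_bound: "norm x \<le> C * norm (x + y)"
      using norm_block_sum_initial_le[where k = k and c = c and N = N]
      by (simp add: x_def y_def sum_lessThan_add)
    have xu: "norm x \<le> K * norm u" and "(1 / K) * norm u \<le> norm x"
      using vs unfolding mem_emb_tree_iff u_def x_def k_def by blast+
    then have ux: "norm u \<le> K * norm x" using \<open>1 \<le> K\<close> by (simp add: field_simps)
    have wy: "norm w \<le> norm y" and yw: "norm y \<le> K0 * norm w"
      using ws_equiv[of "\<lambda>j. c (k + j)"] by (simp_all add: w_def y_def)
    have "(\<Sum>i<k + N. c i *\<^sub>R (vs @ ws) ! i) = u + w"
      using sum_append_nth[of c vs ws] by (simp add: u_def w_def k_def ws(1))
    moreover have "(\<Sum>i<k + N. c i *\<^sub>R z i) = x + y" by (simp add: x_def y_def sum_lessThan_add)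
    ultimately show ?thesis
      using norm_add_equiv[OF C_ge \<open>1 \<le> K\<close> \<open>1 \<le> K0\<close> u_bound x_bound xu ux wy yw] by simp
  qed
  moreover have "set (vs @ ws) \<subseteq> Y" using vs ws by (auto simp: mem_emb_tree_iff)
  ultimately have "vs @ ws \<in> emb_tree z Y (5 * C * (K + K0))"
    using ws(1) by (auto simp: mem_emb_tree_iff k_def)
  then show ?thesis using ws(1) by (intro bexI[of _ "vs @ ws"]) auto
qed

end

theorem proposition1p4:
  fixes e :: "nat \<Rightarrow> 'a::banach"
  assumes "schauder_basis e"
    and "locally_minimal (UNIV :: 'a set)"
  shows "omega2_minimal e"
proof -
  interpret schauder e by (rule schauder.intro) fact
  obtain C where C: "C \<ge> 1" "\<And>N x. norm (psum N x) \<le> C * norm x" using basis_constant by blast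
  obtain K0 where "K0 \<ge> 1"
    and loc_min: "\<And>F Y :: 'a set. fin_dim_subspace F \<Longrightarrow> inf_dim_subspace Y \<Longrightarrow> embeds_with_const F Y K0"
    using assms(2) unfolding locally_minimal_def by blast
  show ?thesis unfolding omega2_minimal_def Emb_ge_omega2_def
  proof (intro allI impI disjI2)
    fix z :: "nat \<Rightarrow> 'a" and Y :: "'a set" and m n assume "block_basis e z" and Y: "inf_dim_subspace Y"
    then obtain p a where "strict_mono p" "\<And>n. z n = (\<Sum>i\<in>{p n..<p (Suc n)}. a i *\<^sub>R e i)"
      "\<And>n. z n \<noteq> 0"
      unfolding block_basis_def by blast
    with C interpret block_sequence e C p a z by unfold_locales
    note extend = emb_tree_extend[OF _ _ \<open>K0 \<ge> 1\<close> Y loc_min]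
    show "\<exists>K\<ge>1. rank_gt (emb_tree z Y K) m n"
    proof (rule rank_gt_if_extendable[where f = "\<lambda>K. 5 * C * (K + K0)"])
      show "K \<le> 5 * C * (K + K0)" if "1 \<le> K" for K
        using le_extension_constant[OF C(1) that] \<open>K0 \<ge> 1\<close> by simp
    qed (auto intro: emb_tree_prefix_closed extend dest: emb_tree_mono simp: Nil_in_emb_tree)
  qed
qed

end
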